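(* Let $p,q\in(0,1/2)$ with $\frac{\log p}{\log q}\notin\mathbb Q$. Then the system $\{S_1,S_2,S_3,S_4\}$, where $S_1(x)=px$, $S_2(x)=qx$, $S_3(x)=px+1-p$, $S_4(x)=qx+1-q$, does not have the weak separation property.
   Context: For a system $\{S_1,\dots,S_m\}$ of contracting similarities, let $I^*$ be the set of finite words over $\{1,\dots,m\}$ and $S_{\mathbf i}=S_{i_1}\circ\cdots\circ S_{i_n}$ for $\mathbf i=i_1\dots i_n$. The weak separation property (WSP, in the sense of Lau and Ngai) holds, equivalently (Zerner), if and only if the identity map is not an accumulation point of the family $\{S_{\mathbf j}^{-1}S_{\mathbf i}:\mathbf i,\mathbf j\in I^*\}\setminus\{\mathrm{Id}\}$ (in the topology of similarity maps, e.g. convergence of the coefficients of the affine maps). *)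

theory Defs
  imports "HOL-Analysis.Analysis"
begin

text \<open>A similarity of the real line is represented by its coefficient pair (a,b),
  standing for the affine map x \<mapsto> a*x + b (a \<noteq> 0).  The topology on
  similarities is that of convergence of coefficients, i.e. the product topology
  on real \<times> real.\<close>

type_synonym sim = "real \<times> real"

definition sim_apply :: "sim \<Rightarrow> real \<Rightarrow> real" where
  "sim_apply f x = fst f * x + snd f"

definition sim_comp :: "sim \<Rightarrow> sim \<Rightarrow> sim" where
  "sim_comp f g = (fst f * fst g, fst f * snd g + snd f)"

definition sim_inv :: "sim \<Rightarrow> sim" where
  "sim_inv f = (1 / fst f, - snd f / fst f)"

definition sim_id :: sim where
  "sim_id = (1, 0)"

definition words :: "sim list \<Rightarrow> nat list set" where
  "words S = {w. set w \<subseteq> {..<length S}}"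

fun word_map :: "sim list \<Rightarrow> nat list \<Rightarrow> sim" where
  "word_map S [] = sim_id"
| "word_map S (i # w) = sim_comp (S ! i) (word_map S w)"

text \<open>Weak separation property, via Zerner's characterization: the identity is not
  an accumulation point of {S_j^{-1} S_i : i, j words} minus {Id}.\<close>

definition WSP :: "sim list \<Rightarrow> bool" where
  "WSP S \<longleftrightarrow> \<not> (sim_id islimpt
      ({sim_comp (sim_inv (word_map S j)) (word_map S i) | i j. i \<in> words S \<and> j \<in> words S}
        - {sim_id}))"

end

theory Submission
  imports Defs
begin

text \<open>The maps S_1 x = p x and S_2 x = q x alone already destroy the weak separation
  property: S_2^{-h} S_1^k is the homothety with ratio p^k / q^h = exp (k ln p - h ln q),
  and since ln p / ln q is irrational, Dirichlet's approximation theorem makes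
  k ln p - h ln q nonzero but arbitrarily small for suitable natural numbers k, h.\<close>

lemma nat_combination_small:
  fixes a b e :: real
  assumes "0 < a" "0 < b" "a / b \<notin> \<rat>" "0 < e"
  obtains k h :: nat where "real k * a \<noteq> real h * b" "\<bar>real k * a - real h * b\<bar> < e"
proof -
  define \<theta> where "\<theta> = a / b"
  obtain N :: nat where N: "b / e < N" using reals_Archimedean2 by blast
  have "0 < b / e" using assms by simp
  with N have N_pos: "N > 0" by simp
  have b_N: "b / N < e"
    using N N_pos assms by (simp add: field_simps)
  obtain k h :: int where kh: "0 < k" "\<bar>of_int k * \<theta> - of_int h\<bar> < 1 / N"
    using Dirichlet_approx[OF N_pos] by blast
  have "1 / real N \<le> 1" using N_pos by simp
  moreover have "of_int k * \<theta> > 0" using kh(1) assms by (simp add: \<theta>_def)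
  ultimately have "h \<ge> 0" using kh(2) by linarith
  have comb: "real (nat k) * a - real (nat h) * b = b * (of_int k * \<theta> - of_int h)"
    using kh(1) \<open>h \<ge> 0\<close> assms(2) by (simp add: \<theta>_def field_simps)
  show thesis
  proof
    show "real (nat k) * a \<noteq> real (nat h) * b"
    proof
      assume "real (nat k) * a = real (nat h) * b"
      then have "\<theta> = of_int h / of_int k" using comb kh(1) assms(2) by (simp add: field_simps)
      then show False using assms(3) unfolding \<theta>_def by (metis Rats_divide Rats_of_int)
    qed
    have "\<bar>real (nat k) * a - real (nat h) * b\<bar> = b * \<bar>of_int k * \<theta> - of_int h\<bar>"
      using comb assms(2) by (simp add: abs_mult)
    also have "\<dots> \<le> b / N" using kh(2) assms(2) mult_left_mono[of _ "1 / N" b] by simp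
    finally show "\<bar>real (nat k) * a - real (nat h) * b\<bar> < e" using b_N by simp
  qed
qed

lemma power_ratio_islimpt_1:
  fixes p q :: real
  assumes "0 < p" "p < 1" "0 < q" "q < 1" "ln p / ln q \<notin> \<rat>"
  shows "1 islimpt {p ^ k / q ^ h | k h. True}"
  unfolding islimpt_approachable
proof (intro allI impI)
  fix e :: real
  assume "0 < e"
  obtain d where d: "d > 0" "\<And>x. dist x 0 < d \<Longrightarrow> dist (exp x) (exp (0::real)) < e"
    using \<open>0 < e\<close> isCont_exp[of 0] unfolding continuous_at_eps_delta by blast
  have "0 < - ln p" "0 < - ln q" using assms by simp_all
  moreover have "- ln p / - ln q \<notin> \<rat>" using assms(5) by simp
  ultimately obtain k h :: nat where
    kh: "real k * - ln p \<noteq> real h * - ln q" "\<bar>real k * - ln p - real h * - ln q\<bar> < d"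
    using nat_combination_small d(1) by metis
  define x where "x = real k * ln p - real h * ln q"
  have ratio: "p ^ k / q ^ h = exp x"
    using assms by (simp add: x_def exp_diff exp_of_nat_mult)
  have "x \<noteq> 0" using kh(1) by (simp add: x_def)
  moreover have "\<bar>x\<bar> < d" using kh(2) by (simp add: x_def abs_minus_commute)
  ultimately have "p ^ k / q ^ h \<noteq> 1 \<and> dist (p ^ k / q ^ h) 1 < e"
    using d(2)[of x] ratio by simp
  then show "\<exists>y\<in>{p ^ k / q ^ h | k h. True}. y \<noteq> 1 \<and> dist y 1 < e"
    by blast
qed

lemma word_map_replicate:
  assumes "i < length S" "snd (S ! i) = 0"
  shows "word_map S (replicate n i) = (fst (S ! i) ^ n, 0)"
  using assms by (induction n) (auto simp: sim_id_def sim_comp_def)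

theorem proposition9:
  fixes p q :: real
  assumes "0 < p" "p < 1/2" "0 < q" "q < 1/2"
    and "ln p / ln q \<notin> \<rat>"
  shows "\<not> WSP [(p, 0), (q, 0), (p, 1 - p), (q, 1 - q)]"
proof -
  define S where "S = [(p, 0), (q, 0), (p, 1 - p), (q, 1 - q)]"
  define T where "T = {sim_comp (sim_inv (word_map S j)) (word_map S i) | i j.
    i \<in> words S \<and> j \<in> words S} - {sim_id}"
  have homothety_in_T: "(p ^ k / q ^ h, 0) \<in> T" if "p ^ k / q ^ h \<noteq> 1" for k h
  proof -
    have "word_map S (replicate k 0) = (p ^ k, 0)" "word_map S (replicate h 1) = (q ^ h, 0)"
      by (simp_all add: S_def word_map_replicate)
    then have "(p ^ k / q ^ h, 0) = sim_comp (sim_inv (word_map S (replicate h 1)))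
        (word_map S (replicate k 0))"
      by (simp add: sim_comp_def sim_inv_def)
    moreover have "replicate k 0 \<in> words S" "replicate h 1 \<in> words S"
      by (auto simp: words_def S_def)
    moreover have "(p ^ k / q ^ h, 0) \<noteq> sim_id"
      using that by (simp add: sim_id_def)
    ultimately show ?thesis
      unfolding T_def by blast
  qed
  have "1 islimpt {p ^ k / q ^ h | k h. True}"
    using power_ratio_islimpt_1 assms by simp
  then have "sim_id islimpt (\<lambda>x. (x, 0)) ` ({p ^ k / q ^ h | k h. True} - {1})"
    unfolding islimpt_approachable sim_id_def by (fastforce simp: dist_Pair_Pair)
  moreover have "(\<lambda>x. (x, 0)) ` ({p ^ k / q ^ h | k h. True} - {1}) \<subseteq> T"
    using homothety_in_T by blast
  ultimately have "sim_id islimpt T"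
    by (rule islimpt_subset)
  then show ?thesis unfolding WSP_def S_def[symmetric] T_def by simp
qed

end
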